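(* Let $k$ be a positive integer, let $d\ge0$ and let $p\in\mathbb{C}[x_1,x_2]$ be homogeneous of degree $d$. Let $0\le i_1,\dots,i_k,j_1,\dots,j_k\le d$ be integers with $\sum_\ell i_\ell=\sum_\ell j_\ell$. Then, in $\mathbb{C}[x_1,x_2,y_1,y_2]$, $$\Delta^{j_1}(p)\cdots\Delta^{j_k}(p)\in\Big\langle\,\Delta^{i_1}(p)\cdots\Delta^{i_k}(p),\ B^{k-1}\cdot(x_1y_2-x_2y_1)\,\Big\rangle,$$ where $B=\{p,\Delta(p),\dots,\Delta^{d}(p),\,x_1y_2-x_2y_1\}$, $B^{k-1}\cdot(x_1y_2-x_2y_1)$ denotes the set of all products of $k-1$ elements of $B$ multiplied by $x_1y_2-x_2y_1$, and $\langle\cdot\rangle$ denotes the generated ideal.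
   Context: $\Delta$ is the polarization operator $\Delta=y_1\,\partial_{x_1}+y_2\,\partial_{x_2}$ acting on $\mathbb{C}[x_1,x_2,y_1,y_2]$, and $\Delta^i$ its $i$-th iterate. *)

theory Defs
  imports Complex_Main "HOL-Library.Poly_Mapping"
begin

text \<open>We use the variables
x1 = 0, x2 = 1, y1 = 2, y2 = 3, so C[x1,x2,y1,y2] is the subring of
polynomials involving only the variables 0..3.\<close>

type_synonym mpoly = "(nat \<Rightarrow>\<^sub>0 nat) \<Rightarrow>\<^sub>0 complex"

definition Var :: "nat \<Rightarrow> mpoly" where
  "Var i = Poly_Mapping.single (Poly_Mapping.single i 1) 1"

definition pdiff :: "nat \<Rightarrow> mpoly \<Rightarrow> mpoly" where
  "pdiff i p = (\<Sum>(m::nat \<Rightarrow>\<^sub>0 nat)\<in>Poly_Mapping.keys p.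
      Poly_Mapping.single (m - Poly_Mapping.single i 1)
        (of_nat (Poly_Mapping.lookup m i) * Poly_Mapping.lookup p m))"

definition Delta :: "mpoly \<Rightarrow> mpoly" where
  "Delta p = Var 2 * pdiff 0 p + Var 3 * pdiff 1 p"

definition homog_xy :: "nat \<Rightarrow> mpoly \<Rightarrow> bool" where
  "homog_xy d p \<longleftrightarrow> (\<forall>m\<in>Poly_Mapping.keys p. Poly_Mapping.keys m \<subseteq> {0, 1} \<and> (\<Sum>v\<in>Poly_Mapping.keys m. Poly_Mapping.lookup m v) = d)"

definition ideal_gen :: "'a::comm_ring_1 set \<Rightarrow> 'a set" where
  "ideal_gen S = {x. \<exists>F c. finite F \<and> F \<subseteq> S \<and> x = (\<Sum>s\<in>F. c s * s)}"

definition wdet :: mpoly where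
  "wdet = Var 0 * Var 3 - Var 1 * Var 2"

definition Bset :: "nat \<Rightarrow> mpoly \<Rightarrow> mpoly set" where
  "Bset d p = {(Delta ^^ i) p | i. i \<le> d} \<union> {wdet}"

definition Bpow_w :: "nat \<Rightarrow> nat \<Rightarrow> mpoly \<Rightarrow> mpoly set" where
  "Bpow_w k d p = {prod_list bs * wdet | bs. length bs = k - 1 \<and> set bs \<subseteq> Bset d p}"

end

theory Submission
  imports Defs
begin

(* Write w = x1 y2 - x2 y1 and E = x1 d/dx1 + x2 d/dx2 for the Euler operator.  Since p is
   homogeneous of degree d, each polar Delta^a p is an eigenvector of E with eigenvalue d - a.
   The identity  E F * Delta G - Delta F * E G = w * Jac(F, G)  together with the fact that
   w divides Jac(F, Delta F) for every E-eigenvector F shows that the "exchange defect"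
     D(a, b) = (d - a) Delta^a p Delta^(b+1) p - (d - b) Delta^(a+1) p Delta^b p
   is divisible by w^2 for b = a + 1; since Delta is a derivation killing w, and
   Delta D(a, b) = D(a + 1, b) + D(a, b + 1), divisibility by w^2 propagates to all a, b.
   Multiplying D(a, b) by the remaining k - 2 factors of a product of polars shows that one
   may move a unit of exponent from one factor to another modulo the ideal generated by
   B^(k-1) * w.  Finally, any exponent vector j can be transformed into i (same sum) by
   such moves, which proves the theorem. *)

section \<open>Formal partial derivatives\<close>

abbreviation unit_mon :: "nat \<Rightarrow> (nat \<Rightarrow>\<^sub>0 nat)" where
  "unit_mon i \<equiv> Poly_Mapping.single i 1"

abbreviation const_poly :: "complex \<Rightarrow> mpoly" where
  "const_poly c \<equiv> Poly_Mapping.single 0 c"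

lemma monomial_expansion:
  "f = (\<Sum>m\<in>Poly_Mapping.keys f. Poly_Mapping.single m (Poly_Mapping.lookup f m))"
  by (rule poly_mapping_eqI) (simp add: lookup_sum lookup_single when_def sum.delta' in_keys_iff)

lemma lookup_monomial_diff:
  "Poly_Mapping.lookup (m - n) v = Poly_Mapping.lookup m v - Poly_Mapping.lookup n v"
  for m n :: "nat \<Rightarrow>\<^sub>0 nat"
  by (simp add: minus_poly_mapping.rep_eq)

lemma unit_mon_add_diff:
  "Poly_Mapping.lookup m i \<ge> 1 \<Longrightarrow> unit_mon i + (m - unit_mon i) = m"
  by (auto simp: poly_mapping_eq_iff fun_eq_iff lookup_monomial_diff lookup_add lookup_single when_def)

lemma lookup_pdiff:
  "Poly_Mapping.lookup (pdiff i f) n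
     = of_nat (Poly_Mapping.lookup n i + 1) * Poly_Mapping.lookup f (n + unit_mon i)"
proof -
  have coeff_term: "Poly_Mapping.lookup (Poly_Mapping.single (m - unit_mon i)
                (of_nat (Poly_Mapping.lookup m i) * Poly_Mapping.lookup f m)) n
      = (if m = n + unit_mon i then of_nat (Poly_Mapping.lookup m i) * Poly_Mapping.lookup f m else 0)"
    for m
  proof (cases "Poly_Mapping.lookup m i \<ge> 1")
    case True
    then have "m - unit_mon i = n \<longleftrightarrow> m = n + unit_mon i"
      using unit_mon_add_diff[OF True] by (auto simp: add.commute)
    then show ?thesis by (auto simp: lookup_single when_def)
  next
    case False
    then have "m \<noteq> n + unit_mon i" by (auto simp: lookup_add)
    with False show ?thesis by (simp add: lookup_single when_def)
  qed
  have "Poly_Mapping.lookup (pdiff i f) n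
      = (\<Sum>m\<in>Poly_Mapping.keys f. if m = n + unit_mon i
           then of_nat (Poly_Mapping.lookup m i) * Poly_Mapping.lookup f m else 0)"
    unfolding pdiff_def lookup_sum coeff_term ..
  also have "\<dots> = of_nat (Poly_Mapping.lookup n i + 1) * Poly_Mapping.lookup f (n + unit_mon i)"
    by (auto simp: sum.delta' lookup_add in_keys_iff)
  finally show ?thesis .
qed

lemma pdiff_add: "pdiff i (f + g) = pdiff i f + pdiff i g"
  by (rule poly_mapping_eqI) (simp add: lookup_pdiff lookup_add algebra_simps)

lemma pdiff_diff: "pdiff i (f - g) = pdiff i f - pdiff i g"
  by (rule poly_mapping_eqI) (simp add: lookup_pdiff lookup_minus algebra_simps)

lemma pdiff_sum: "pdiff i (sum f S) = (\<Sum>s\<in>S. pdiff i (f s))"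
  by (rule poly_mapping_eqI) (simp add: lookup_pdiff lookup_sum sum_distrib_left)

lemma pdiff_commute: "pdiff i (pdiff j f) = pdiff j (pdiff i f)"
  by (rule poly_mapping_eqI) (auto simp: lookup_pdiff lookup_add lookup_single when_def algebra_simps)

lemma pdiff_single:
  "pdiff i (Poly_Mapping.single m c)
     = Poly_Mapping.single (m - unit_mon i) (of_nat (Poly_Mapping.lookup m i) * c)"
  by (simp add: pdiff_def)

lemma pdiff_const: "pdiff i (const_poly c) = 0"
  by (simp add: pdiff_single)

lemma pdiff_Var: "pdiff i (Var j) = (if i = j then 1 else 0)"
  by (auto simp: Var_def pdiff_single lookup_single when_def)

text \<open>Leibniz rule for two monomials: both sides are monomials of exponent m + n - e_i,
  whose coefficients add up to (m_i + n_i) a b.\<close>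
lemma pdiff_mult_monomials:
  "pdiff i (Poly_Mapping.single m a * Poly_Mapping.single n b)
     = pdiff i (Poly_Mapping.single m a) * Poly_Mapping.single n b
       + Poly_Mapping.single m a * pdiff i (Poly_Mapping.single n b)"
proof -
  have shift: "Poly_Mapping.single (q - unit_mon i + r) (of_nat (Poly_Mapping.lookup q i) * c)
      = Poly_Mapping.single (q + r - unit_mon i) (of_nat (Poly_Mapping.lookup q i) * c)"
    for q r :: "nat \<Rightarrow>\<^sub>0 nat" and c
  proof (cases "Poly_Mapping.lookup q i = 0")
    case False
    then have "q - unit_mon i + r = q + r - unit_mon i"
      by (auto simp: poly_mapping_eq_iff fun_eq_iff lookup_monomial_diff lookup_add lookup_single when_def)
    then show ?thesis by simp
  qed simp
  have "pdiff i (Poly_Mapping.single m a) * Poly_Mapping.single n b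
      + Poly_Mapping.single m a * pdiff i (Poly_Mapping.single n b)
      = Poly_Mapping.single (m + n - unit_mon i) (of_nat (Poly_Mapping.lookup m i) * (a * b))
      + Poly_Mapping.single (m + n - unit_mon i) (of_nat (Poly_Mapping.lookup n i) * (a * b))"
    using shift[of m n "a * b"] shift[of n m "a * b"]
    by (simp add: pdiff_single mult_single add.commute mult.left_commute mult.assoc)
  also have "\<dots> = pdiff i (Poly_Mapping.single m a * Poly_Mapping.single n b)"
    by (simp add: mult_single pdiff_single lookup_add algebra_simps flip: single_add)
  finally show ?thesis ..
qed

lemma pdiff_mult: "pdiff i (f * g) = pdiff i f * g + f * pdiff i g"
proof -
  have left_monomial: "pdiff i (Poly_Mapping.single m a * h)
      = pdiff i (Poly_Mapping.single m a) * h + Poly_Mapping.single m a * pdiff i h" for m a h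
    by (subst (1 2 3) monomial_expansion[of h])
      (simp add: sum_distrib_left pdiff_sum pdiff_mult_monomials sum.distrib)
  show ?thesis
    by (subst (1 2 3) monomial_expansion[of f])
      (simp add: sum_distrib_right pdiff_sum left_monomial sum.distrib)
qed

section \<open>The polarization operator Delta\<close>

lemma Delta_diff: "Delta (f - g) = Delta f - Delta g"
  by (simp add: Delta_def pdiff_diff algebra_simps)

lemma Delta_mult: "Delta (f * g) = Delta f * g + f * Delta g"
  by (simp add: Delta_def pdiff_mult algebra_simps)

lemma Delta_const: "Delta (const_poly c) = 0"
  by (simp add: Delta_def pdiff_const)

lemma Delta_const_mult: "Delta (const_poly c * f) = const_poly c * Delta f"
  by (simp add: Delta_mult Delta_const)

lemma Delta_wdet: "Delta wdet = 0"
  by (simp add: Delta_def wdet_def pdiff_diff pdiff_mult pdiff_Var algebra_simps)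

lemma dvd_Delta:
  assumes "Delta c = 0" and "c dvd f"
  shows "c dvd Delta f"
  using assms by (auto simp: Delta_mult)

section \<open>The Euler operator\<close>

definition Euler :: "mpoly \<Rightarrow> mpoly" where
  "Euler f = Var 0 * pdiff 0 f + Var 1 * pdiff 1 f"

lemma Euler_single:
  "Euler (Poly_Mapping.single m c)
     = const_poly (of_nat (Poly_Mapping.lookup m 0 + Poly_Mapping.lookup m 1)) * Poly_Mapping.single m c"
proof -
  have Var_times: "Var i * pdiff i (Poly_Mapping.single m c)
      = Poly_Mapping.single m (of_nat (Poly_Mapping.lookup m i) * c)" for i
  proof (cases "Poly_Mapping.lookup m i \<ge> 1")
    case True
    then show ?thesis using unit_mon_add_diff[OF True] by (simp add: pdiff_single Var_def mult_single)
  next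
    case False
    then have "Poly_Mapping.lookup m i = 0" by simp
    then show ?thesis by (simp add: pdiff_single)
  qed
  show ?thesis
    unfolding Euler_def Var_times by (simp add: mult_single algebra_simps flip: single_add)
qed

lemma Euler_homog:
  assumes "homog_xy d p"
  shows "Euler p = const_poly (of_nat d) * p"
proof -
  have degree: "Poly_Mapping.lookup m 0 + Poly_Mapping.lookup m 1 = d"
    if "m \<in> Poly_Mapping.keys p" for m
  proof -
    from assms that have keys: "Poly_Mapping.keys m \<subseteq> {0, 1}"
      and total: "(\<Sum>v\<in>Poly_Mapping.keys m. Poly_Mapping.lookup m v) = d"
      unfolding homog_xy_def by auto
    have "(\<Sum>v\<in>Poly_Mapping.keys m. Poly_Mapping.lookup m v) = (\<Sum>v\<in>{0, 1}. Poly_Mapping.lookup m v)"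
      by (rule sum.mono_neutral_left) (use keys in \<open>auto simp: in_keys_iff\<close>)
    with total show ?thesis by simp
  qed
  have "Euler p = (\<Sum>m\<in>Poly_Mapping.keys p. Euler (Poly_Mapping.single m (Poly_Mapping.lookup p m)))"
    by (subst monomial_expansion) (simp add: Euler_def pdiff_sum sum_distrib_left sum.distrib)
  also have "\<dots> = (\<Sum>m\<in>Poly_Mapping.keys p.
      const_poly (of_nat d) * Poly_Mapping.single m (Poly_Mapping.lookup p m))"
  proof (rule sum.cong[OF refl])
    fix m assume "m \<in> Poly_Mapping.keys p"
    then show "Euler (Poly_Mapping.single m (Poly_Mapping.lookup p m))
        = const_poly (of_nat d) * Poly_Mapping.single m (Poly_Mapping.lookup p m)"
      by (simp only: Euler_single degree)
  qed
  also have "\<dots> = const_poly (of_nat d) * p"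
    by (subst (2) monomial_expansion) (simp add: sum_distrib_left)
  finally show ?thesis .
qed

lemma Euler_Delta: "Euler (Delta f) = Delta (Euler f) - Delta f"
  by (simp add: Euler_def Delta_def pdiff_add pdiff_mult pdiff_Var pdiff_commute[of "Suc 0" 0]
      algebra_simps)

lemma Euler_pdiff:
  assumes "i \<in> {0, 1}"
  shows "Euler (pdiff i f) = pdiff i (Euler f) - pdiff i f"
  using assms by (auto simp: Euler_def pdiff_add pdiff_mult pdiff_Var pdiff_commute[of "Suc 0" 0])

text \<open>The eigenvalues d - a drop by one with each application of Delta.\<close>
lemma const_poly_shift:
  "const_poly (of_nat d - of_nat (Suc n)) = const_poly (of_nat d - of_nat n) - 1"
proof -
  have "(of_nat d - of_nat (Suc n) :: complex) = (of_nat d - of_nat n) - 1" by simp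
  then show ?thesis by (simp only: single_diff single_one)
qed

lemma Euler_Delta_power:
  assumes "homog_xy d p"
  shows "Euler ((Delta ^^ a) p) = const_poly (of_nat d - of_nat a) * (Delta ^^ a) p"
proof (induction a)
  case 0
  show ?case using Euler_homog[OF assms] by simp
next
  case (Suc a)
  let ?F = "(Delta ^^ a) p"
  have "Euler (Delta ?F) = Delta (Euler ?F) - Delta ?F"
    by (rule Euler_Delta)
  also have "\<dots> = (const_poly (of_nat d - of_nat a) - 1) * Delta ?F"
    by (simp only: Suc Delta_const_mult left_diff_distrib mult_1_left)
  also have "\<dots> = const_poly (of_nat d - of_nat (Suc a)) * Delta ?F"
    by (simp only: const_poly_shift)
  finally show ?case by simp
qed

section \<open>Jacobians and divisibility by w\<close>

definition Jac :: "mpoly \<Rightarrow> mpoly \<Rightarrow> mpoly" where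
  "Jac f g = pdiff 0 f * pdiff 1 g - pdiff 1 f * pdiff 0 g"

text \<open>The key identity: E f Delta g - Delta f E g is the determinant of the product of the
  matrices with rows (x1, x2), (y1, y2) and the Jacobian matrix of (f, g).\<close>
lemma Euler_Delta_wronskian: "Euler f * Delta g - Delta f * Euler g = wdet * Jac f g"
  by (simp add: Euler_def Delta_def wdet_def Jac_def algebra_simps)

lemma lookup_Var_mult_shift:
  "Poly_Mapping.lookup (Var i * f) (unit_mon i + n) = Poly_Mapping.lookup f n"
  by (subst monomial_expansion[of f])
    (simp add: sum_distrib_left Var_def mult_single lookup_sum lookup_single when_def
      sum.delta' in_keys_iff)

lemma lookup_Var_mult_zero:
  assumes "Poly_Mapping.lookup n i = 0"
  shows "Poly_Mapping.lookup (Var i * f) n = 0"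
proof -
  have "unit_mon i + m \<noteq> n" for m
  proof
    assume "unit_mon i + m = n"
    then have "Poly_Mapping.lookup n i = 1 + Poly_Mapping.lookup m i"
      by (auto simp: lookup_add)
    with assms show False by simp
  qed
  then show ?thesis
    by (subst monomial_expansion[of f])
      (simp add: sum_distrib_left Var_def mult_single lookup_sum lookup_single when_def)
qed

lemma Var_nonzero: "Var i \<noteq> 0"
  unfolding Var_def by (metis lookup_single_eq lookup_zero one_neq_zero)

lemma Var_syzygy:
  assumes "i \<noteq> j" and syz: "Var i * A + Var j * B = 0"
  shows "\<exists>C. A = Var j * C \<and> B = - (Var i * C)"
proof -
  have divisible: "Poly_Mapping.lookup m j \<ge> 1" if "m \<in> Poly_Mapping.keys A" for m
  proof (rule ccontr)
    assume "\<not> Poly_Mapping.lookup m j \<ge> 1"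
    then have "Poly_Mapping.lookup (unit_mon i + m) j = 0"
      using assms(1) by (simp add: lookup_add lookup_single)
    then have "Poly_Mapping.lookup (Var j * B) (unit_mon i + m) = 0"
      by (rule lookup_Var_mult_zero)
    moreover have "Var i * A = - (Var j * B)"
      using syz by (simp add: eq_neg_iff_add_eq_0)
    ultimately have "Poly_Mapping.lookup A m = 0"
      using lookup_Var_mult_shift[of i A m] by simp
    with that show False by (simp add: in_keys_iff)
  qed
  define C where
    "C = (\<Sum>m\<in>Poly_Mapping.keys A. Poly_Mapping.single (m - unit_mon j) (Poly_Mapping.lookup A m))"
  have A: "A = Var j * C"
  proof -
    have "Var j * C = (\<Sum>m\<in>Poly_Mapping.keys A.
        Poly_Mapping.single (unit_mon j + (m - unit_mon j)) (Poly_Mapping.lookup A m))"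
      by (simp add: C_def sum_distrib_left Var_def mult_single)
    also have "\<dots> = (\<Sum>m\<in>Poly_Mapping.keys A. Poly_Mapping.single m (Poly_Mapping.lookup A m))"
      using unit_mon_add_diff[OF divisible] by (intro sum.cong) auto
    also have "\<dots> = A"
      by (rule monomial_expansion[symmetric])
    finally show ?thesis by simp
  qed
  have "Var j * (Var i * C + B) = 0"
    using syz A by (simp add: algebra_simps)
  then have "B = - (Var i * C)"
    using Var_nonzero[of j] by (simp add: eq_neg_iff_add_eq_0 add.commute)
  with A show ?thesis by blast
qed

text \<open>If f is an eigenvector of E, then w divides Jac(f, Delta f).  The coefficients of y1, y2
  in Jac(f, Delta f) form a syzygy of (x1, x2) by Euler's relation for the partials of f.\<close>
lemma wdet_dvd_Jac_Delta:
  assumes eigen: "Euler f = const_poly \<alpha> * f"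
  shows "wdet dvd Jac f (Delta f)"
proof -
  define A where "A = pdiff 0 f * pdiff 0 (pdiff 1 f) - pdiff 1 f * pdiff 0 (pdiff 0 f)"
  define B where "B = pdiff 0 f * pdiff 1 (pdiff 1 f) - pdiff 1 f * pdiff 0 (pdiff 1 f)"
  have Jac_coeffs: "Jac f (Delta f) = Var 2 * A + Var 3 * B"
    by (simp add: A_def B_def Jac_def Delta_def pdiff_add pdiff_mult pdiff_Var
        pdiff_commute[of "Suc 0" 0] algebra_simps)
  have partial_eigen: "Euler (pdiff i f) = (const_poly \<alpha> - 1) * pdiff i f" if "i \<in> {0, 1}" for i
    using Euler_pdiff[OF that] by (simp add: eigen pdiff_mult pdiff_const algebra_simps)
  have "Var 0 * A + Var 1 * B = pdiff 0 f * Euler (pdiff 1 f) - pdiff 1 f * Euler (pdiff 0 f)"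
    by (simp add: A_def B_def Euler_def pdiff_commute[of "Suc 0" 0] algebra_simps)
  also have "\<dots> = 0"
    by (simp only: partial_eigen insertI1 insertI2 singletonI) (simp add: algebra_simps)
  finally obtain C where "A = Var 1 * C" "B = - (Var 0 * C)"
    using Var_syzygy[of 0 1] by auto
  then have "Jac f (Delta f) = wdet * (- C)"
    by (simp add: Jac_coeffs wdet_def algebra_simps)
  then show ?thesis by (rule dvdI)
qed

section \<open>The exchange defect is divisible by w^2\<close>

definition defect :: "nat \<Rightarrow> mpoly \<Rightarrow> nat \<Rightarrow> nat \<Rightarrow> mpoly" where
  "defect d p a b
     = const_poly (of_nat d - of_nat a) * (Delta ^^ a) p * (Delta ^^ Suc b) p
     - const_poly (of_nat d - of_nat b) * (Delta ^^ Suc a) p * (Delta ^^ b) p"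

lemma defect_antisym: "defect d p b a = - defect d p a b"
  by (simp add: defect_def algebra_simps)

lemma Delta_defect: "Delta (defect d p a b) = defect d p (Suc a) b + defect d p a (Suc b)"
  unfolding defect_def const_poly_shift
  by (simp add: Delta_diff Delta_mult Delta_const algebra_simps)

text \<open>Base case: for F = Delta^a p we have D(a, a + 1) = E F Delta^2 F - Delta F E (Delta F),
  which equals w Jac(F, Delta F) and is therefore divisible by w^2.\<close>
lemma wdet_sq_dvd_defect_Suc:
  assumes "homog_xy d p"
  shows "wdet ^ 2 dvd defect d p a (Suc a)"
proof -
  let ?F = "(Delta ^^ a) p"
  have "defect d p a (Suc a) = Euler ?F * Delta (Delta ?F) - Delta ?F * Euler (Delta ?F)"
    using Euler_Delta_power[OF assms, of a] Euler_Delta_power[OF assms, of "Suc a"]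
    by (simp add: defect_def algebra_simps)
  also have "\<dots> = wdet * Jac ?F (Delta ?F)"
    by (rule Euler_Delta_wronskian)
  finally show ?thesis
    using wdet_dvd_Jac_Delta[OF Euler_Delta_power[OF assms]] by (simp add: power2_eq_square)
qed

text \<open>Induction on the gap b - a, using D(a, b + 1) = Delta D(a, b) - D(a + 1, b).\<close>
lemma wdet_sq_dvd_defect:
  assumes "homog_xy d p"
  shows "wdet ^ 2 dvd defect d p a b"
proof -
  have Delta_wdet_sq: "Delta (wdet ^ 2) = 0"
    by (simp add: power2_eq_square Delta_mult Delta_wdet)
  have gap: "\<forall>a. wdet ^ 2 dvd defect d p a (a + n) \<and> wdet ^ 2 dvd defect d p a (a + Suc n)" for n
  proof (induction n)
    case 0
    show ?case using wdet_sq_dvd_defect_Suc[OF assms] by (simp add: defect_def)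
  next
    case (Suc n)
    have "wdet ^ 2 dvd defect d p a (a + Suc (Suc n))" for a
    proof -
      have "defect d p a (a + Suc (Suc n))
          = Delta (defect d p a (a + Suc n)) - defect d p (Suc a) (Suc a + n)"
        by (simp add: Delta_defect)
      then show ?thesis
        using Suc.IH dvd_Delta[OF Delta_wdet_sq] by (metis dvd_diff)
    qed
    with Suc.IH show ?case by blast
  qed
  show ?thesis
  proof (cases "a \<le> b")
    case True
    then show ?thesis using gap[of "b - a"] by (metis le_add_diff_inverse)
  next
    case False
    then have "wdet ^ 2 dvd defect d p b a" using gap[of "a - b"] by (metis le_add_diff_inverse nat_le_linear)
    then show ?thesis by (simp add: defect_antisym[of d p a b])
  qed
qed

section \<open>Generated ideals\<close>

lemma ideal_gen_base: "s \<in> S \<Longrightarrow> s \<in> ideal_gen S"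
  unfolding ideal_gen_def by (rule CollectI, rule exI[of _ "{s}"], rule exI[of _ "\<lambda>_. 1"]) simp

lemma ideal_gen_mono: "S \<subseteq> T \<Longrightarrow> x \<in> ideal_gen S \<Longrightarrow> x \<in> ideal_gen T"
  unfolding ideal_gen_def by blast

lemma ideal_gen_mult: "x \<in> ideal_gen S \<Longrightarrow> r * x \<in> ideal_gen S"
proof -
  assume "x \<in> ideal_gen S"
  then obtain F c where "finite F" "F \<subseteq> S" "x = (\<Sum>s\<in>F. c s * s)"
    unfolding ideal_gen_def by auto
  moreover from this have "r * x = (\<Sum>s\<in>F. (r * c s) * s)"
    by (simp add: sum_distrib_left mult.assoc)
  ultimately show ?thesis unfolding ideal_gen_def by auto
qed

lemma ideal_gen_add: "x \<in> ideal_gen S \<Longrightarrow> y \<in> ideal_gen S \<Longrightarrow> x + y \<in> ideal_gen S"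
proof -
  assume "x \<in> ideal_gen S" "y \<in> ideal_gen S"
  then obtain F1 c1 F2 c2 where F: "finite F1" "F1 \<subseteq> S" "x = (\<Sum>s\<in>F1. c1 s * s)"
    "finite F2" "F2 \<subseteq> S" "y = (\<Sum>s\<in>F2. c2 s * s)"
    unfolding ideal_gen_def by auto
  define c where "c s = (if s \<in> F1 then c1 s else 0) + (if s \<in> F2 then c2 s else 0)" for s
  have extend: "(\<Sum>s\<in>G. c' s * s) = (\<Sum>s\<in>F1 \<union> F2. (if s \<in> G then c' s else 0) * s)"
    if "G \<subseteq> F1 \<union> F2" for G and c' :: "'a \<Rightarrow> 'a"
    using that F(1,4) by (intro sum.mono_neutral_cong_left) auto
  have "x = (\<Sum>s\<in>F1 \<union> F2. (if s \<in> F1 then c1 s else 0) * s)"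
    and "y = (\<Sum>s\<in>F1 \<union> F2. (if s \<in> F2 then c2 s else 0) * s)"
    using F(3,6) extend[of F1] extend[of F2] by auto
  then have "x + y = (\<Sum>s\<in>F1 \<union> F2. c s * s)"
    by (simp add: c_def distrib_right sum.distrib)
  moreover have "finite (F1 \<union> F2)" "F1 \<union> F2 \<subseteq> S" using F by auto
  ultimately show ?thesis unfolding ideal_gen_def by auto
qed

section \<open>Exchanging exponents between two factors\<close>

lemma Bset_Delta_power: "a \<le> d \<Longrightarrow> (Delta ^^ a) p \<in> Bset d p"
  unfolding Bset_def by auto

lemma Bset_wdet: "wdet \<in> Bset d p"
  unfolding Bset_def by auto

lemma wdet_sq_prod_in_Bpow_w:
  fixes S :: "'a::linorder set"
  assumes "finite S" and "card S + 2 = k" and "\<forall>l\<in>S. v l \<le> d"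
  shows "wdet ^ 2 * (\<Prod>l\<in>S. (Delta ^^ v l) p) \<in> Bpow_w k d p"
proof -
  define bs where "bs = wdet # map (\<lambda>l. (Delta ^^ v l) p) (sorted_list_of_set S)"
  have "prod_list (map (\<lambda>l. (Delta ^^ v l) p) (sorted_list_of_set S)) = (\<Prod>l\<in>S. (Delta ^^ v l) p)"
    using assms(1) by (subst prod.distinct_set_conv_list[symmetric]) auto
  then have "prod_list bs * wdet = wdet ^ 2 * (\<Prod>l\<in>S. (Delta ^^ v l) p)"
    by (simp add: bs_def power2_eq_square mult_ac)
  moreover have "length bs = k - 1" and "set bs \<subseteq> Bset d p"
    using assms by (auto simp: bs_def Bset_wdet Bset_Delta_power)
  ultimately show ?thesis unfolding Bpow_w_def by (metis (mono_tags, lifting) mem_Collect_eq)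
qed

lemma prod_split_two:
  fixes f :: "'a \<Rightarrow> 'b::comm_monoid_mult"
  assumes "finite A" "l1 \<in> A" "l2 \<in> A" "l1 \<noteq> l2"
  shows "prod f A = f l1 * f l2 * prod f (A - {l1, l2})"
proof -
  have "prod f A = f l1 * prod f (A - {l1})"
    using assms by (simp add: prod.remove)
  also have "A - {l1} = insert l2 (A - {l1, l2})"
    using assms by auto
  also have "prod f \<dots> = f l2 * prod f (A - {l1, l2})"
    using assms by simp
  finally show ?thesis by (simp add: mult.assoc)
qed

lemma exchange_step:
  assumes hom: "homog_xy d p"
    and l: "l1 < k" "l2 < k" "l1 \<noteq> l2"
    and room: "v l1 < d" and unit: "1 \<le> v l2" and bounded: "\<forall>l<k. v l \<le> d"
  shows "\<exists>c. (\<Prod>l<k. (Delta ^^ v l) p)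
              - c * (\<Prod>l<k. (Delta ^^ (v(l1 := Suc (v l1), l2 := v l2 - 1)) l) p)
            \<in> ideal_gen (Bpow_w k d p)"
proof -
  define v' where "v' = v(l1 := Suc (v l1), l2 := v l2 - 1)"
  define a where "a = v l1"
  define b where "b = v l2 - 1"
  define S where "S = {..<k} - {l1, l2}"
  define R where "R = (\<Prod>l\<in>S. (Delta ^^ v l) p)"
  have "v l2 = Suc b" using unit by (simp add: b_def)
  have "(\<Prod>l<k. (Delta ^^ v l) p) = (Delta ^^ v l1) p * (Delta ^^ v l2) p * R"
    using prod_split_two[of "{..<k}" l1 l2] l by (simp add: R_def S_def)
  then have Pv: "(\<Prod>l<k. (Delta ^^ v l) p) = (Delta ^^ a) p * (Delta ^^ Suc b) p * R"
    by (simp only: a_def \<open>v l2 = Suc b\<close>)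
  have "(\<Prod>l\<in>S. (Delta ^^ v' l) p) = R"
    unfolding R_def by (rule prod.cong) (auto simp: v'_def S_def)
  then have "(\<Prod>l<k. (Delta ^^ v' l) p) = (Delta ^^ v' l1) p * (Delta ^^ v' l2) p * R"
    using prod_split_two[of "{..<k}" l1 l2 "\<lambda>l. (Delta ^^ v' l) p"] l by (simp add: S_def)
  moreover have "v' l1 = Suc a" "v' l2 = b" using l by (simp_all add: v'_def a_def b_def)
  ultimately have Pv': "(\<Prod>l<k. (Delta ^^ v' l) p) = (Delta ^^ Suc a) p * (Delta ^^ b) p * R"
    by (simp only:)
  obtain h where h: "defect d p a b = wdet ^ 2 * h"
    using wdet_sq_dvd_defect[OF hom] by blast
  have R_generator: "wdet ^ 2 * R \<in> Bpow_w k d p"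
    unfolding R_def S_def using l bounded
    by (intro wdet_sq_prod_in_Bpow_w) (auto simp: card_Diff_subset)
  define \<gamma> :: complex where "\<gamma> = of_nat d - of_nat a"
  have "\<gamma> \<noteq> 0" using room by (simp add: \<gamma>_def a_def)
  then have inverse: "const_poly (1 / \<gamma>) * const_poly \<gamma> = 1"
    by (simp add: mult_single)
  have "defect d p a b * R
      = const_poly \<gamma> * (\<Prod>l<k. (Delta ^^ v l) p)
      - const_poly (of_nat d - of_nat b) * (\<Prod>l<k. (Delta ^^ v' l) p)"
    unfolding Pv Pv' defect_def \<gamma>_def by (simp only: left_diff_distrib mult.assoc)
  then have "const_poly (1 / \<gamma>) * (defect d p a b * R) = (\<Prod>l<k. (Delta ^^ v l) p)
      - (const_poly (1 / \<gamma>) * const_poly (of_nat d - of_nat b)) * (\<Prod>l<k. (Delta ^^ v' l) p)"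
    by (simp only: right_diff_distrib mult.assoc[symmetric] inverse mult_1_left)
  moreover have "const_poly (1 / \<gamma>) * (defect d p a b * R)
      = const_poly (1 / \<gamma>) * h * (wdet ^ 2 * R)"
    by (simp add: h mult_ac)
  moreover have "const_poly (1 / \<gamma>) * h * (wdet ^ 2 * R) \<in> ideal_gen (Bpow_w k d p)"
    by (intro ideal_gen_mult ideal_gen_base R_generator)
  ultimately show ?thesis unfolding v'_def by metis
qed

section \<open>Connecting exponent vectors with equal sums\<close>

lemma same_sum_differ:
  fixes v i :: "'a \<Rightarrow> 'b::{ordered_cancel_comm_monoid_add, linorder}"
  assumes "finite A" and sums: "sum v A = sum i A" and "\<exists>l\<in>A. v l \<noteq> i l"
  shows "\<exists>l\<in>A. v l < i l" and "\<exists>l\<in>A. i l < v l"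
proof -
  have bigger: "\<exists>l\<in>A. g l < f l"
    if "sum f A = sum g A" "\<exists>l\<in>A. f l \<noteq> g l" for f g :: "'a \<Rightarrow> 'b"
  proof (rule ccontr)
    assume "\<not> (\<exists>l\<in>A. g l < f l)"
    then have le: "\<forall>l\<in>A. f l \<le> g l" by (auto simp: not_less)
    with that(2) have "\<exists>l\<in>A. f l < g l" by (auto simp: order_less_le)
    with le have "sum f A < sum g A" by (intro sum_strict_mono_ex1 \<open>finite A\<close>)
    with that(1) show False by simp
  qed
  show "\<exists>l\<in>A. v l < i l" using bigger[of i v] assms by (metis sums)
  show "\<exists>l\<in>A. i l < v l" using bigger[of v i] assms by metis
qed

lemma polar_product_in_ideal:
  assumes hom: "homog_xy d p" and i_bounded: "\<forall>l<k. i l \<le> d"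
  shows "(\<forall>l<k. v l \<le> d) \<Longrightarrow> (\<Sum>l<k. v l) = (\<Sum>l<k. i l) \<Longrightarrow>
    (\<Prod>l<k. (Delta ^^ v l) p) \<in> ideal_gen ({\<Prod>l<k. (Delta ^^ i l) p} \<union> Bpow_w k d p)"
proof (induction "\<Sum>l<k. v l - i l" arbitrary: v rule: less_induct)
  case (less v)
  let ?I = "ideal_gen ({\<Prod>l<k. (Delta ^^ i l) p} \<union> Bpow_w k d p)"
  show ?case
  proof (cases "\<forall>l<k. v l = i l")
    case True
    then have "(\<Prod>l<k. (Delta ^^ v l) p) = (\<Prod>l<k. (Delta ^^ i l) p)" by simp
    then show ?thesis by (simp add: ideal_gen_base)
  next
    case False
    then obtain l1 l2 where l1: "l1 < k" "v l1 < i l1" and l2: "l2 < k" "i l2 < v l2"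
      using same_sum_differ[of "{..<k}" v i] less.prems(2) by auto
    then have distinct: "l1 \<noteq> l2" by auto
    define v' where "v' = v(l1 := Suc (v l1), l2 := v l2 - 1)"
    have v'_bounded: "\<forall>l<k. v' l \<le> d"
      using less.prems(1) i_bounded l1 l2 by (auto simp: v'_def)
    have "(\<Sum>l<k. v' l) = (\<Sum>l<k. v l)"
      using l1 l2 distinct
      by (simp add: v'_def sum.remove[of "{..<k}" l1] sum.remove[of "{..<k} - {l1}" l2])
    then have v'_sum: "(\<Sum>l<k. v' l) = (\<Sum>l<k. i l)" using less.prems(2) by simp
    have "(\<Sum>l<k. v' l - i l) < (\<Sum>l<k. v l - i l)"
      using l1 l2 distinct by (intro sum_strict_mono_ex1) (auto simp: v'_def)
    then have v'_in: "(\<Prod>l<k. (Delta ^^ v' l) p) \<in> ?I"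
      using less.hyps v'_bounded v'_sum by blast
    obtain c where "(\<Prod>l<k. (Delta ^^ v l) p) - c * (\<Prod>l<k. (Delta ^^ v' l) p)
        \<in> ideal_gen (Bpow_w k d p)"
      using exchange_step[OF hom l1(1) l2(1) distinct _ _ less.prems(1)] l1 l2 i_bounded
      unfolding v'_def by fastforce
    then have "((\<Prod>l<k. (Delta ^^ v l) p) - c * (\<Prod>l<k. (Delta ^^ v' l) p))
        + c * (\<Prod>l<k. (Delta ^^ v' l) p) \<in> ?I"
      by (intro ideal_gen_add ideal_gen_mult v'_in) (auto intro: ideal_gen_mono)
    then show ?thesis by simp
  qed
qed

theorem lemma3p16:
  fixes k d :: nat and p :: mpoly and i j :: "nat \<Rightarrow> nat"
  assumes "k \<ge> 1"
    and "homog_xy d p"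
    and "\<forall>l<k. i l \<le> d" and "\<forall>l<k. j l \<le> d"
    and "(\<Sum>l<k. i l) = (\<Sum>l<k. j l)"
  shows "(\<Prod>l<k. (Delta ^^ j l) p)
           \<in> ideal_gen ({\<Prod>l<k. (Delta ^^ i l) p} \<union> Bpow_w k d p)"
  using polar_product_in_ideal[OF assms(2,3)] assms(4,5) by simp

end
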